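(* For every $\kappa>1$ there exist $\rho\ge 1+\ln\kappa$ and a non-decreasing, concave, differentiable function $v:[0,1]\to\mathbb{R}_{\ge0}$ with $v(1)=1$ and $v'(0)/v(1)=\kappa$ such that for every price $p>0$ and every $z\in\arg\max_{z'\in[0,1]}(v(z')-pz')$, one has $p\,z\le 1/\rho$. Consequently, for a single agent whose valuation is $v$ with probability $1$, every linear pricing obtains revenue at most a $1/\rho$ fraction of the revenue $v(1)=1$ obtained by the non-linear pricing that charges $v(z)$ for fraction $z$.
   Context: Linear pricing at price $p$ per unit charges $pz$ for a fraction $z$ of a divisible item; a buyer with valuation $v$ buys a fraction maximizing $v(z)-pz$ over $z\in[0,1]$, and the seller's revenue is $p$ times that fraction. The curvature of $v$ is $v'(0)/v(1)$. *)

theory Defs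
  imports "HOL-Analysis.Analysis"
begin

definition demand :: "(real \<Rightarrow> real) \<Rightarrow> real \<Rightarrow> real set" where
  "demand v p = {z \<in> {0..1}. \<forall>z'\<in>{0..1}. v z' - p * z' \<le> v z - p * z}"

definition linear_revenue :: "real \<Rightarrow> real \<Rightarrow> real" where
  "linear_revenue p z = p * z"

end

theory Submission
  imports Defs
begin

text \<open>The valuation is linear up to a kink at \<open>a\<close> and logarithmic beyond it, scaled so that
  \<open>v 1 = 1\<close>; then \<open>z * v' z \<le> 1 / (1 - ln a)\<close> for all \<open>z\<close>. A maximiser \<open>z > 0\<close> of
  \<open>v z - p * z\<close> satisfies the one-sided first-order condition \<open>p \<le> v' z\<close>, so every linear price
  earns at most \<open>\<rho> = 1 - ln a\<close>. Choosing \<open>a\<close> with \<open>a * (1 - ln a) = 1 / \<kappa>\<close> makes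
  \<open>v' 0 = \<kappa>\<close>, and then \<open>ln \<kappa> = \<rho> - 1 - ln \<rho> \<le> \<rho> - 1\<close>.\<close>

lemma deriv_nonneg_at_left_maximum:
  fixes f :: "real \<Rightarrow> real"
  assumes der: "(f has_real_derivative D) (at x)" and "l < x"
    and max: "\<And>y. y \<in> {l..x} \<Longrightarrow> f y \<le> f x"
  shows "0 \<le> D"
proof (rule ccontr)
  assume "\<not> 0 \<le> D"
  then obtain d where "0 < d" and dec: "\<And>h. 0 < h \<Longrightarrow> h < d \<Longrightarrow> f x < f (x - h)"
    using DERIV_neg_dec_left[OF der] by force
  define h where "h = min (d / 2) (x - l)"
  have "0 < h" "h < d" "x - h \<in> {l..x}"
    using \<open>0 < d\<close> \<open>l < x\<close> by (auto simp: h_def)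
  then show False
    using dec max by fastforce
qed

lemma ex_mult_one_minus_ln_eq:
  fixes c :: real
  assumes "0 < c" and "c \<le> 1"
  shows "\<exists>a. 0 < a \<and> a \<le> 1 \<and> a * (1 - ln a) = c"
proof -
  \<comment> \<open>\<open>t\<^sup>2\<close> is a point where \<open>a * (1 - ln a)\<close> is already below \<open>c\<close>, by \<open>- ln t \<le> 1 / t - 1\<close>.\<close>
  define t where "t = c / 2"
  have t: "0 < t" "t < 1"
    using assms by (auto simp: t_def)
  have "- ln t \<le> 1 / t - 1"
    using ln_le_minus_one[of "1 / t"] t by (simp add: ln_div)
  have "t\<^sup>2 * (1 - ln (t\<^sup>2)) = t\<^sup>2 + 2 * t\<^sup>2 * (- ln t)"
    using t by (simp add: ln_realpow algebra_simps)
  also have "\<dots> \<le> t\<^sup>2 + 2 * t\<^sup>2 * (1 / t - 1)"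
    using \<open>- ln t \<le> 1 / t - 1\<close> by (intro add_left_mono mult_left_mono) auto
  also have "\<dots> = c - t\<^sup>2"
    using t by (simp add: t_def power2_eq_square field_simps)
  finally have low: "t\<^sup>2 * (1 - ln (t\<^sup>2)) \<le> c"
    using zero_le_power2[of t] by linarith
  have "t\<^sup>2 \<le> 1"
    using t by (simp add: power_le_one)
  moreover have "continuous_on {t\<^sup>2..1} (\<lambda>a. a * (1 - ln a))"
    using t by (intro continuous_intros) auto
  ultimately obtain a where "t\<^sup>2 \<le> a" "a \<le> 1" "a * (1 - ln a) = c"
    using IVT'[of "\<lambda>a. a * (1 - ln a)" "t\<^sup>2" c 1] low \<open>c \<le> 1\<close> by auto
  with t show ?thesis
    by (intro exI[of _ a]) (auto intro: less_le_trans[OF zero_less_power])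
qed

definition kinked_log :: "real \<Rightarrow> real \<Rightarrow> real" where
  "kinked_log a z = (if z \<le> a then z / a else 1 + ln (z / a)) / (1 - ln a)"

definition kinked_log_deriv :: "real \<Rightarrow> real \<Rightarrow> real" where
  "kinked_log_deriv a z = (if z \<le> a then 1 / a else 1 / z) / (1 - ln a)"

context
  fixes a :: real
  assumes a_pos: "0 < a" and a_le_1: "a \<le> 1"
begin

lemma one_minus_ln_pos: "0 < 1 - ln a"
proof -
  have "ln a \<le> 0"
    using a_pos a_le_1 by simp
  then show ?thesis
    by linarith
qed

lemma has_real_derivative_kinked_log:
  "(kinked_log a has_real_derivative kinked_log_deriv a x) (at x)"
proof -
  define W where "W = 1 - ln a"
  have W: "0 < W"
    using one_minus_ln_pos by (simp add: W_def)
  have eq: "kinked_log a = (\<lambda>z. if z \<in> {..a} then z / (a * W) else (1 + ln (z / a)) / W)"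
    by (auto simp: kinked_log_def W_def)
  have eq': "kinked_log_deriv a x = (if x \<in> {..a} then 1 / (a * W) else 1 / (x * W))"
    by (auto simp: kinked_log_deriv_def W_def)
  have "((\<lambda>z. if z \<in> {..a} then z / (a * W) else (1 + ln (z / a)) / W) has_vector_derivative
      (if x \<in> {..a} then 1 / (a * W) else 1 / (x * W))) (at x within UNIV)"
  proof (rule has_vector_derivative_If_within_closures[where T = "{a<..}"])
    show "((\<lambda>z. z / (a * W)) has_vector_derivative 1 / (a * W))
        (at x within {..a} \<union> (closure {..a} \<inter> closure {a<..}))"
      using a_pos W by (auto intro!: derivative_eq_intros simp: has_real_derivative_iff_has_vector_derivative[symmetric])
    show "((\<lambda>z. (1 + ln (z / a)) / W) has_vector_derivative 1 / (x * W))
        (at x within {a<..} \<union> (closure {..a} \<inter> closure {a<..}))"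
      if "x \<in> {a<..} \<union> (closure {..a} \<inter> closure {a<..})"
      using that a_pos W by (auto intro!: derivative_eq_intros simp: has_real_derivative_iff_has_vector_derivative[symmetric])
  qed (use a_pos W in auto)
  then show ?thesis
    unfolding eq eq' by (simp add: has_real_derivative_iff_has_vector_derivative)
qed

lemma kinked_log_deriv_pos: "0 < kinked_log_deriv a x"
  unfolding kinked_log_deriv_def using a_pos one_minus_ln_pos by (intro divide_pos_pos) auto

lemma kinked_log_deriv_antimono:
  assumes "x \<le> y"
  shows "kinked_log_deriv a y \<le> kinked_log_deriv a x"
proof -
  have "(if y \<le> a then 1 / a else 1 / y) \<le> (if x \<le> a then 1 / a else 1 / x)"
    using assms a_pos by (auto intro!: divide_left_mono)
  then show ?thesis
    unfolding kinked_log_deriv_def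
    by (rule divide_right_mono) (use one_minus_ln_pos in linarith)
qed

lemma mono_kinked_log: "mono (kinked_log a)"
proof (rule monoI)
  show "kinked_log a x \<le> kinked_log a y" if "x \<le> y" for x y
    using DERIV_nonneg_imp_nondecreasing[OF that] has_real_derivative_kinked_log
      kinked_log_deriv_pos by (meson less_imp_le)
qed

lemma concave_on_kinked_log: "concave_on S (kinked_log a)" if "connected S"
  unfolding concave_on_def
proof (rule convex_on_realI[where f' = "\<lambda>x. - kinked_log_deriv a x"])
  show "((\<lambda>z. - kinked_log a z) has_real_derivative - kinked_log_deriv a x) (at x)" for x
    using has_real_derivative_kinked_log by (rule DERIV_minus)
  show "- kinked_log_deriv a x \<le> - kinked_log_deriv a y" if "x \<le> y" for x y
    using kinked_log_deriv_antimono[OF that] by linarith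
qed (use that in blast)

lemma kinked_log_0: "kinked_log a 0 = 0"
  using a_pos by (simp add: kinked_log_def)

lemma kinked_log_1: "kinked_log a 1 = 1"
proof (cases "a = 1")
  case False
  then have "kinked_log a 1 = (1 - ln a) / (1 - ln a)"
    using a_pos a_le_1 by (simp add: kinked_log_def ln_div)
  then show ?thesis
    using one_minus_ln_pos by simp
qed (simp add: kinked_log_def)

lemma demand_kinked_log_revenue_le:
  assumes "z \<in> demand (kinked_log a) p"
  shows "linear_revenue p z \<le> 1 / (1 - ln a)"
proof (cases "z = 0")
  case True
  then show ?thesis
    using one_minus_ln_pos by (simp add: linear_revenue_def)
next
  case False
  with assms have z: "0 < z" "z \<le> 1"
    and opt: "\<And>y. y \<in> {0..z} \<Longrightarrow> kinked_log a y - p * y \<le> kinked_log a z - p * z"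
    by (auto simp: demand_def)
  have "((\<lambda>y. kinked_log a y - p * y) has_real_derivative kinked_log_deriv a z - p) (at z)"
    by (intro DERIV_diff has_real_derivative_kinked_log DERIV_cmult_Id)
  then have "0 \<le> kinked_log_deriv a z - p"
    using \<open>0 < z\<close> opt by (rule deriv_nonneg_at_left_maximum)
  then have "p * z \<le> z * kinked_log_deriv a z"
    using z by (simp add: mult.commute mult_right_mono)
  also have "\<dots> = (if z \<le> a then z / a else 1) / (1 - ln a)"
    using z by (simp add: kinked_log_deriv_def)
  also have "\<dots> \<le> 1 / (1 - ln a)"
    using a_pos one_minus_ln_pos by (intro divide_right_mono) auto
  finally show ?thesis
    by (simp add: linear_revenue_def)
qed

lemma one_plus_ln_kinked_log_deriv_0_le: "1 + ln (kinked_log_deriv a 0) \<le> 1 - ln a"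
proof -
  have "ln (kinked_log_deriv a 0) = - ln a - ln (1 - ln a)"
    using a_pos one_minus_ln_pos by (simp add: kinked_log_deriv_def ln_div ln_mult)
  moreover have "0 \<le> ln (1 - ln a)"
    using a_pos a_le_1 by simp
  ultimately show ?thesis
    by linarith
qed

end

theorem mainTheorem12:
  fixes \<kappa> :: real
  assumes "\<kappa> > 1"
  shows "\<exists>\<rho> v. \<rho> \<ge> 1 + ln \<kappa>
     \<and> mono_on {0..1} v
     \<and> concave_on {0..1} v
     \<and> (\<forall>x\<in>{0..1}. v differentiable (at x within {0..1}))
     \<and> (\<forall>x\<in>{0..1}. v x \<ge> 0)
     \<and> v 1 = 1
     \<and> (\<exists>D. (v has_real_derivative D) (at 0 within {0..1}) \<and> D / v 1 = \<kappa>)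
     \<and> (\<forall>p>0. \<forall>z\<in>demand v p. linear_revenue p z \<le> 1 / \<rho>)"
proof -
  obtain a where a: "0 < a" "a \<le> 1" and "a * (1 - ln a) = 1 / \<kappa>"
    using ex_mult_one_minus_ln_eq[of "1 / \<kappa>"] assms by auto
  then have slope: "kinked_log_deriv a 0 = \<kappa>"
    by (simp add: kinked_log_deriv_def)
  have "1 + ln \<kappa> \<le> 1 - ln a"
    using one_plus_ln_kinked_log_deriv_0_le[OF a] slope by simp
  moreover have "mono_on {0..1} (kinked_log a)"
    using mono_kinked_log[OF a] by (rule mono_imp_mono_on)
  moreover have "concave_on {0..1} (kinked_log a)"
    using concave_on_kinked_log[OF a] by simp
  moreover have "\<forall>x\<in>{0..1}. kinked_log a differentiable (at x within {0..1})"
    using has_real_derivative_kinked_log[OF a]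
    by (meson has_field_derivative_at_within real_differentiable_def)
  moreover have "\<forall>x\<in>{0..1}. kinked_log a x \<ge> 0"
    using monoD[OF mono_kinked_log[OF a], of 0] kinked_log_0[OF a] by simp
  moreover have "(kinked_log a has_real_derivative \<kappa>) (at 0 within {0..1})"
    using has_real_derivative_kinked_log[OF a, of 0] slope by (simp add: has_field_derivative_at_within)
  ultimately show ?thesis
    using kinked_log_1[OF a] demand_kinked_log_revenue_le[OF a]
    by (intro exI[of _ "1 - ln a"] exI[of _ "kinked_log a"]) auto
qed

end
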